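(* Fix $d\ge 1$ and $\boldsymbol\theta_0\in\Theta_1$. Define $N_\infty:\Theta_1\to\mathbb R$ by $$N_\infty(\boldsymbol\theta)=\frac{\boldsymbol\theta^\top\boldsymbol\theta}{2}-\mathbb E_{\mathbf X\sim N_d(\boldsymbol\theta_0,\mathbf I_d)}\log\cosh(\boldsymbol\theta^\top\mathbf X).$$ Then $N_\infty$ is differentiable on $\mathrm{int}(\Theta_1)$, $N_\infty$ is uniquely minimized over $\Theta_1$ at $\boldsymbol\theta=\boldsymbol\theta_0$, and $\boldsymbol\theta_0$ is the unique solution of $\nabla N_\infty(\boldsymbol\theta)=\mathbf 0_d$ in $\mathrm{int}(\Theta_1)$.
   Context: $\Theta=\mathbb R^d\setminus\{\mathbf 0\}$. $\Theta_1$ is the "lexicographically positive" half-space $\{\theta_1>0\}\cup\{\theta_1=0,\theta_2>0\}\cup\cdots\cup\{\theta_1=\cdots=\theta_{d-1}=0,\theta_d>0\}$, and $\Theta_2=-\Theta_1$, so $\Theta=\Theta_1\cup\Theta_2$. *)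

theory Defs
  imports "HOL-Probability.Probability"
begin

text \<open>Vectors in R^d are modelled as \<open>real ^ 'n\<close> where the index type \<open>'n\<close> is finite
  and linearly ordered; the order on \<open>'n\<close> gives the coordinate order 1,...,d used by
  the lexicographic half-space.\<close>

definition Theta1 :: "(real ^ 'n::{finite,linorder}) set" where
  "Theta1 = {\<theta>. \<exists>k. \<theta> $ k > 0 \<and> (\<forall>j. j < k \<longrightarrow> \<theta> $ j = 0)}"

definition gauss_Id :: "real ^ 'n::finite \<Rightarrow> (real ^ 'n) measure" where
  "gauss_Id \<mu> = density lborel (\<lambda>x. ennreal (\<Prod>i\<in>UNIV. normal_density (\<mu> $ i) 1 (x $ i)))"

definition N_inf :: "real ^ 'n::finite \<Rightarrow> real ^ 'n \<Rightarrow> real" where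
  "N_inf \<theta>0 \<theta> = (\<theta> \<bullet> \<theta>) / 2 - (\<integral>x. ln (cosh (\<theta> \<bullet> x)) \<partial>gauss_Id \<theta>0)"

end

theory Submission
  imports Defs
begin

(* Let X ~ N(theta0, I). The symmetric mixture (N(theta, I) + N(-theta, I)) / 2 has density
   phi(x) exp (-|theta|^2 / 2) cosh (theta . x), so with r the ratio of the mixture densities
   for theta and theta0 one gets N_inf theta - N_inf theta0 = E (r(X) - 1 - ln r(X)) and E r(X) = 1.
   As s - 1 - ln s > 0 for s <> 1 and r is continuous, N_inf theta = N_inf theta0 forces r = 1
   everywhere, i.e. theta = +-theta0, and -theta0 lies outside Theta1.

   The derivative h |-> theta . h - E (tanh (theta . X) h . X) exists because (ln cosh)'' <= 1.
   Gaussian integration by parts gives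
   E (tanh (theta . X) X) = E (1 - tanh^2 (theta . X)) theta + E (tanh (theta . X)) theta0,
   so a stationary point in Theta1 is a positive multiple kappa theta0. Along theta0 the equation
   reads kappa |theta0|^2 = E (tanh (kappa theta0 . X) theta0 . X); kappa = 1 solves it by the
   Nishimori identity E tanh (theta0 . X) = E tanh^2 (theta0 . X), and no other kappa does since
   tanh u / u is strictly decreasing on (0, oo). *)

section \<open>Real-variable estimates\<close>

lemma taylor_quadratic_remainder:
  fixes f f' f'' :: "real \<Rightarrow> real"
  assumes f: "\<And>y. (f has_real_derivative f' y) (at y)"
    and f': "\<And>y. (f' has_real_derivative f'' y) (at y)"
    and f''_bound: "\<And>y. \<bar>y - a\<bar> \<le> \<bar>s\<bar> \<Longrightarrow> \<bar>f'' y\<bar> \<le> M"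
  shows "\<bar>f (a + s) - f a - s * f' a\<bar> \<le> M / 2 * s\<^sup>2"
proof (cases "s = 0")
  case True
  then show ?thesis by simp
next
  case False
  define diff where "diff = (\<lambda>m::nat. if m = 0 then f else if m = 1 then f' else f'')"
  have "\<exists>t. (if a + s < a then a + s < t \<and> t < a else a < t \<and> t < a + s) \<and>
      f (a + s) = (\<Sum>m<2. diff m a / fact m * (a + s - a) ^ m) + diff 2 t / fact 2 * (a + s - a)\<^sup>2"
    by (rule Taylor[where a = "min a (a + s)" and b = "max a (a + s)"])
      (use False in \<open>auto simp: diff_def f f'\<close>)
  then obtain t where t: "if a + s < a then a + s < t \<and> t < a else a < t \<and> t < a + s"
    and expansion: "f (a + s) =
      (\<Sum>m<2. diff m a / fact m * (a + s - a) ^ m) + diff 2 t / fact 2 * (a + s - a)\<^sup>2"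
    by blast
  have "\<bar>t - a\<bar> \<le> \<bar>s\<bar>"
    using t by (auto split: if_splits)
  have "f (a + s) - f a - s * f' a = f'' t / 2 * s\<^sup>2"
    using expansion by (simp add: diff_def numeral_2_eq_2 algebra_simps)
  then have "\<bar>f (a + s) - f a - s * f' a\<bar> = \<bar>f'' t / 2 * s\<^sup>2\<bar>"
    by (rule arg_cong)
  also have "\<dots> = \<bar>f'' t\<bar> / 2 * s\<^sup>2"
    by (simp add: abs_mult)
  also have "\<dots> \<le> M / 2 * s\<^sup>2"
    using f''_bound[OF \<open>\<bar>t - a\<bar> \<le> \<bar>s\<bar>\<close>] by (intro mult_right_mono divide_right_mono) auto
  finally show ?thesis .
qed

lemma abs_tanh_real_le_1: "\<bar>tanh (y::real)\<bar> \<le> 1"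
  using tanh_real_bounds[of y] by (auto simp: abs_le_iff)

lemma tanh_real_square_le_1: "(tanh (y::real))\<^sup>2 \<le> 1"
  using abs_tanh_real_le_1[of y] by (simp add: abs_square_le_1)

lemma has_real_derivative_ln_cosh: "((\<lambda>y. ln (cosh y)) has_real_derivative tanh y) (at (y::real))"
  by (rule derivative_eq_intros refl | simp add: tanh_def divide_inverse mult.commute)+

lemma has_real_derivative_tanh: "(tanh has_real_derivative 1 - (tanh y)\<^sup>2) (at (y::real))"
  using has_field_derivative_tanh[of "\<lambda>x. x" y 1 UNIV] by (simp add: DERIV_ident)

lemma has_real_derivative_sech_square:
  "((\<lambda>y. 1 - (tanh y)\<^sup>2) has_real_derivative - 2 * tanh y * (1 - (tanh y)\<^sup>2)) (at (y::real))"
  by (auto intro!: derivative_eq_intros has_real_derivative_tanh simp: power2_eq_square)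

lemma ln_cosh_taylor: "\<bar>ln (cosh (a + s)) - ln (cosh a) - s * tanh a\<bar> \<le> s\<^sup>2 / 2" for a s :: real
  using taylor_quadratic_remainder[OF has_real_derivative_ln_cosh has_real_derivative_tanh, of a s 1]
    tanh_real_square_le_1 by simp

lemma abs_deriv_sech_square_le_2: "\<bar>- 2 * tanh y * (1 - (tanh y)\<^sup>2)\<bar> \<le> 2" for y :: real
  using abs_tanh_real_le_1[of y] tanh_real_square_le_1[of y] by (simp add: abs_mult mult_le_one)

lemma exp_taylor: "\<bar>exp s - 1 - s\<bar> \<le> exp \<bar>s\<bar> / 2 * s\<^sup>2" for s :: real
  using taylor_quadratic_remainder[of exp exp exp 0 s "exp \<bar>s\<bar>"] by (auto intro: DERIV_exp)

lemma abs_le_exp_abs: "\<bar>y\<bar> \<le> exp \<bar>y\<bar>" for y :: real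
  using exp_ge_add_one_self[of "\<bar>y\<bar>"] by linarith

lemma square_le_exp_abs: "y\<^sup>2 \<le> exp (2 * \<bar>y\<bar>)" for y :: real
  using mult_mono[OF abs_le_exp_abs abs_le_exp_abs, of y y]
  by (simp add: power2_eq_square exp_add[symmetric] abs_mult[symmetric])

lemma cosh_real_le_exp_abs: "cosh y \<le> exp \<bar>y\<bar>" for y :: real
  by (cases "0 \<le> y") (auto simp: cosh_def)

lemma ln_cosh_nonneg: "0 \<le> ln (cosh y)" for y :: real
  using cosh_real_ge_1[of y] by simp

lemma ln_cosh_le_abs: "ln (cosh y) \<le> \<bar>y\<bar>" for y :: real
  using cosh_real_le_exp_abs[of y] ln_le_cancel_iff[of "cosh y" "exp \<bar>y\<bar>"] by simp

lemma exp_tilt_remainder: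
  fixes t w c :: real
  assumes t: "\<bar>t\<bar> \<le> 1" and c: "0 \<le> c"
  shows "\<bar>exp (t * w - t\<^sup>2 * c) - 1 - t * w\<bar> \<le> t\<^sup>2 * (exp (3 * (\<bar>w\<bar> + c)) + c)"
proof -
  define a r where "a = t * w - t\<^sup>2 * c" and "r = \<bar>w\<bar> + c"
  have t2: "t\<^sup>2 \<le> 1"
    using t by (simp add: abs_square_le_1)
  have "\<bar>w - t * c\<bar> \<le> r"
    using t c by (simp add: r_def abs_mult mult_left_le_one_le abs_triangle_ineq4[THEN order_trans])
  then have "(w - t * c)\<^sup>2 \<le> r\<^sup>2"
    using power_mono[of "\<bar>w - t * c\<bar>" r 2] by simp
  moreover have "a\<^sup>2 = t\<^sup>2 * (w - t * c)\<^sup>2"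
    by (simp add: a_def power2_eq_square algebra_simps)
  ultimately have a_sq: "a\<^sup>2 \<le> t\<^sup>2 * r\<^sup>2"
    by (simp add: mult_left_mono)
  have "\<bar>a\<bar> \<le> \<bar>t\<bar> * \<bar>w\<bar> + t\<^sup>2 * c"
    using c by (simp add: a_def abs_mult abs_triangle_ineq4[THEN order_trans])
  also have "\<dots> \<le> 1 * \<bar>w\<bar> + 1 * c"
    using t t2 c by (intro add_mono mult_right_mono) auto
  finally have "\<bar>a\<bar> \<le> r"
    by (simp add: r_def)
  have "0 \<le> r"
    using c by (simp add: r_def)
  have "exp \<bar>a\<bar> \<le> exp r"
    using \<open>\<bar>a\<bar> \<le> r\<close> by simp
  then have "exp \<bar>a\<bar> / 2 \<le> exp r"
    using exp_gt_zero[of r] by linarith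
  moreover have "t\<^sup>2 * r\<^sup>2 \<le> t\<^sup>2 * exp (2 * r)"
    using square_le_exp_abs[of r] \<open>0 \<le> r\<close> by (intro mult_left_mono) auto
  ultimately have "exp \<bar>a\<bar> / 2 * a\<^sup>2 \<le> exp r * (t\<^sup>2 * exp (2 * r))"
    using a_sq by (intro mult_mono) auto
  also have "exp r * (t\<^sup>2 * exp (2 * r)) = t\<^sup>2 * exp (3 * r)"
    by (simp add: exp_add[symmetric])
  finally have "\<bar>exp a - 1 - a\<bar> \<le> t\<^sup>2 * exp (3 * r)"
    using exp_taylor[of a] by linarith
  moreover have "\<bar>exp a - 1 - t * w\<bar> \<le> \<bar>exp a - 1 - a\<bar> + t\<^sup>2 * c"
    using abs_triangle_ineq4[of "exp a - 1 - a" "t\<^sup>2 * c"] c by (simp add: a_def)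
  ultimately show ?thesis
    by (simp add: a_def r_def distrib_left)
qed

lemma tanh_gt_mult_sech_square:
  fixes u :: real
  assumes "0 < u"
  shows "u * (1 - (tanh u)\<^sup>2) < tanh u"
proof -
  define k where "k v = tanh v - v * (1 - (tanh v)\<^sup>2)" for v :: real
  have k_deriv: "(k has_real_derivative 2 * v * tanh v * (1 - (tanh v)\<^sup>2)) (at v)" for v
    unfolding k_def
    by (rule derivative_eq_intros has_real_derivative_tanh has_real_derivative_sech_square refl
        | simp add: algebra_simps)+
  have "k 0 < k u"
  proof (rule DERIV_pos_imp_increasing_open[OF assms])
    fix v :: real
    assume "0 < v" "v < u"
    moreover have "0 < 1 - (tanh v)\<^sup>2"
      using tanh_real_bounds[of v] by (simp add: abs_square_less_1 abs_less_iff)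
    ultimately have "0 < 2 * v * tanh v * (1 - (tanh v)\<^sup>2)"
      by simp
    then show "\<exists>y. (k has_real_derivative y) (at v) \<and> 0 < y"
      using k_deriv by blast
  qed (auto simp: k_def intro!: continuous_intros)
  then show ?thesis
    by (simp add: k_def)
qed

lemma tanh_div_strict_antimono:
  fixes p q :: real
  assumes "0 < p" "p < q"
  shows "tanh q / q < tanh p / p"
proof (rule DERIV_neg_imp_decreasing[OF \<open>p < q\<close>])
  fix u :: real
  assume "p \<le> u" "u \<le> q"
  then have "0 < u"
    using \<open>0 < p\<close> by simp
  then have "((\<lambda>v. tanh v / v) has_real_derivative ((1 - (tanh u)\<^sup>2) * u - tanh u) / u\<^sup>2) (at u)"
    by (auto intro!: derivative_eq_intros has_real_derivative_tanh simp: power2_eq_square)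
  moreover have "((1 - (tanh u)\<^sup>2) * u - tanh u) / u\<^sup>2 < 0"
    using tanh_gt_mult_sech_square[OF \<open>0 < u\<close>] \<open>0 < u\<close>
    by (intro divide_neg_pos) (auto simp: algebra_simps)
  ultimately show "\<exists>y. ((\<lambda>v. tanh v / v) has_real_derivative y) (at u) \<and> y < 0"
    by blast
qed

lemma tanh_scale_strict_ineq:
  fixes a b y :: real
  assumes "0 < a" "a < b" "y \<noteq> 0"
  shows "a * (tanh (b * y) * y) < b * (tanh (a * y) * y)"
proof -
  define z where "z = \<bar>y\<bar>"
  have "0 < z"
    using assms by (simp add: z_def)
  have even: "tanh (c * y) * y = tanh (c * z) * z" for c
    by (cases "y < 0") (auto simp: z_def)
  have "tanh (b * z) / (b * z) < tanh (a * z) / (a * z)"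
    using assms \<open>0 < z\<close> by (intro tanh_div_strict_antimono) auto
  then have "tanh (b * z) / (b * z) * (a * b * z * z) < tanh (a * z) / (a * z) * (a * b * z * z)"
    using assms \<open>0 < z\<close> by (intro mult_strict_right_mono) auto
  then have "a * (tanh (b * z) * z) < b * (tanh (a * z) * z)"
    using assms \<open>0 < z\<close> by (simp add: field_simps)
  then show ?thesis
    by (simp only: even)
qed

lemma eq_0_if_abs_le_quadratic:
  fixes d K :: real
  assumes "\<And>t. 0 < t \<Longrightarrow> t \<le> 1 \<Longrightarrow> \<bar>t * d\<bar> \<le> K * t\<^sup>2"
  shows "d = 0"
proof (rule ccontr)
  assume "d \<noteq> 0"
  define t where "t = min 1 (\<bar>d\<bar> / (2 * (\<bar>K\<bar> + 1)))"
  have t: "0 < t" "t \<le> 1"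
    using \<open>d \<noteq> 0\<close> by (auto simp: t_def)
  have "t * \<bar>d\<bar> \<le> K * t\<^sup>2"
    using assms[OF t] t by (simp add: abs_mult)
  then have "\<bar>d\<bar> \<le> K * t"
    using t by (simp add: power2_eq_square)
  also have "\<dots> \<le> \<bar>K\<bar> * t"
    using t by (intro mult_right_mono) auto
  also have "\<dots> \<le> \<bar>K\<bar> * (\<bar>d\<bar> / (2 * (\<bar>K\<bar> + 1)))"
    by (intro mult_left_mono) (auto simp: t_def)
  also have "\<dots> < \<bar>d\<bar>"
  proof -
    have "\<bar>K\<bar> / (2 * (\<bar>K\<bar> + 1)) < 1"
      by (simp add: field_simps)
    then show ?thesis
      using \<open>d \<noteq> 0\<close> mult_strict_right_mono[of "\<bar>K\<bar> / (2 * (\<bar>K\<bar> + 1))" 1 "\<bar>d\<bar>"] by simp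
  qed
  finally show False
    by simp
qed

section \<open>The Gaussian measure \<open>gauss_Id\<close>\<close>

lemma borel_measurable_cosh_real [measurable]: "(cosh :: real \<Rightarrow> real) \<in> borel_measurable borel"
  by (intro borel_measurable_continuous_onI continuous_intros)

lemma borel_measurable_tanh_real [measurable]: "(tanh :: real \<Rightarrow> real) \<in> borel_measurable borel"
  by (intro borel_measurable_continuous_onI continuous_intros) auto

definition gauss_density :: "real ^ 'n::finite \<Rightarrow> real ^ 'n \<Rightarrow> real" where
  "gauss_density \<mu> x = (\<Prod>i\<in>UNIV. normal_density (\<mu> $ i) 1 (x $ i))"

lemma gauss_Id_eq_density: "gauss_Id \<mu> = density lborel (\<lambda>x. ennreal (gauss_density \<mu> x))"
  unfolding gauss_Id_def gauss_density_def ..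

lemma gauss_density_eq:
  fixes \<mu> x :: "real ^ 'n::finite"
  shows "gauss_density \<mu> x = (1 / sqrt (2 * pi)) ^ CARD('n) * exp (- ((x - \<mu>) \<bullet> (x - \<mu>)) / 2)"
proof -
  have "gauss_density \<mu> x = (\<Prod>i\<in>UNIV. 1 / sqrt (2 * pi) * exp (- ((x $ i - \<mu> $ i)\<^sup>2) / 2))"
    unfolding gauss_density_def normal_density_def by simp
  also have "\<dots> = (1 / sqrt (2 * pi)) ^ CARD('n) * exp (\<Sum>i\<in>UNIV. - ((x $ i - \<mu> $ i)\<^sup>2) / 2)"
    by (simp only: exp_sum[OF finite] finite prod.distrib prod_constant)
  also have "(\<Sum>i\<in>UNIV. - ((x $ i - \<mu> $ i)\<^sup>2) / 2) = - ((x - \<mu>) \<bullet> (x - \<mu>)) / 2"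
    by (simp add: inner_vec_def sum_divide_distrib[symmetric] sum_negf power2_eq_square)
  finally show ?thesis .
qed

lemma gauss_density_pos: "0 < gauss_density \<mu> x"
  by (simp add: gauss_density_def prod_pos normal_density_pos)

lemma borel_measurable_gauss_density [measurable]: "gauss_density \<mu> \<in> borel_measurable borel"
  unfolding gauss_density_def by measurable

lemma gauss_density_translate: "gauss_density \<mu> (\<mu> + x) = gauss_density 0 x"
  by (simp add: gauss_density_eq)

lemma gauss_density_0_uminus: "gauss_density 0 (- x) = gauss_density 0 x"
  by (simp add: gauss_density_eq)

lemma gauss_density_tilt: "gauss_density v x = gauss_density 0 x * exp (v \<bullet> x - v \<bullet> v / 2)"
proof -
  have "- ((x - v) \<bullet> (x - v)) / 2 = - (x \<bullet> x) / 2 + (v \<bullet> x - v \<bullet> v / 2)"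
    by (simp add: inner_diff_left inner_diff_right inner_commute field_simps)
  then have "exp (- ((x - v) \<bullet> (x - v)) / 2) = exp (- (x \<bullet> x) / 2) * exp (v \<bullet> x - v \<bullet> v / 2)"
    by (simp only: exp_add[symmetric])
  then show ?thesis
    by (simp add: gauss_density_eq)
qed

lemma nn_integral_gauss_density: "(\<integral>\<^sup>+x. ennreal (gauss_density \<mu> x) \<partial>lborel) = 1"
  for \<mu> :: "real ^ 'n::finite"
proof -
  let ?f = "\<lambda>b::real ^ 'n. \<lambda>y. ennreal (normal_density (\<mu> \<bullet> b) 1 y)"
  have Basis_eq: "(Basis :: (real ^ 'n) set) = range (\<lambda>i. axis i 1)"
    by (auto simp: Basis_vec_def)
  have "(\<Prod>b\<in>Basis. ?f b (x \<bullet> b)) = (\<Prod>i\<in>UNIV. ?f (axis i 1) (x \<bullet> axis i 1))" for x :: "real ^ 'n"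
    unfolding Basis_eq by (subst prod.reindex) (auto simp: inj_on_def axis_eq_axis)
  then have "(\<integral>\<^sup>+x. ennreal (gauss_density \<mu> x) \<partial>lborel) = (\<integral>\<^sup>+x. (\<Prod>b\<in>Basis. ?f b (x \<bullet> b)) \<partial>lborel)"
    by (simp add: gauss_density_def prod_ennreal inner_axis)
  also have "\<dots> = (\<Prod>b\<in>Basis. (\<integral>\<^sup>+y. ?f b y \<partial>lborel))"
    by (rule nn_integral_lborel_prod) auto
  also have "\<dots> = 1"
    by (intro prod.neutral ballI) (simp add: nn_integral_eq_integral)
  finally show ?thesis .
qed

lemma prob_space_gauss_Id: "prob_space (gauss_Id \<mu>)"
  by (rule prob_spaceI) (simp add: gauss_Id_eq_density emeasure_density nn_integral_gauss_density)

lemma sets_gauss_Id [simp, measurable_cong]: "sets (gauss_Id \<mu>) = sets borel"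
  by (simp add: gauss_Id_eq_density)

lemma space_gauss_Id [simp]: "space (gauss_Id \<mu>) = UNIV"
  by (simp add: gauss_Id_eq_density)

lemma distr_lborel_uminus: "distr lborel borel uminus = (lborel :: (real ^ 'n::finite) measure)"
  using lborel_affine[of "-1" "0 :: real ^ 'n"] by (simp add: density_1)

lemma gauss_Id_eq_distr_translate: "gauss_Id \<mu> = distr (gauss_Id 0) borel ((+) \<mu>)"
proof -
  have "gauss_Id \<mu> = density (distr lborel borel ((+) \<mu>)) (\<lambda>x. ennreal (gauss_density \<mu> x))"
    by (simp add: gauss_Id_eq_density lborel_distr_plus)
  also have "\<dots> = distr (density lborel (\<lambda>y. ennreal (gauss_density \<mu> (\<mu> + y)))) borel ((+) \<mu>)"
    by (rule density_distr) auto
  finally show ?thesis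
    by (simp add: gauss_density_translate gauss_Id_eq_density)
qed

lemma gauss_Id_0_eq_distr_uminus: "gauss_Id 0 = distr (gauss_Id 0) borel uminus"
proof -
  have "gauss_Id 0 = density (distr lborel borel uminus) (\<lambda>x. ennreal (gauss_density 0 x))"
    by (simp add: gauss_Id_eq_density distr_lborel_uminus)
  also have "\<dots> = distr (density lborel (\<lambda>y. ennreal (gauss_density 0 (- y)))) borel uminus"
    by (rule density_distr) auto
  finally show ?thesis
    by (simp add: gauss_density_0_uminus gauss_Id_eq_density)
qed

lemma gauss_Id_eq_density_tilt:
  "gauss_Id v = density (gauss_Id 0) (\<lambda>x. ennreal (exp (v \<bullet> x - v \<bullet> v / 2)))"
proof -
  have "density (gauss_Id 0) (\<lambda>x. ennreal (exp (v \<bullet> x - v \<bullet> v / 2)))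
      = density lborel (\<lambda>x. ennreal (gauss_density 0 x) * ennreal (exp (v \<bullet> x - v \<bullet> v / 2)))"
    unfolding gauss_Id_eq_density by (subst density_density_eq) auto
  also have "\<dots> = density lborel (\<lambda>x. ennreal (gauss_density v x))"
    by (simp add: gauss_density_tilt[of v] ennreal_mult less_imp_le[OF gauss_density_pos])
  finally show ?thesis
    by (simp add: gauss_Id_eq_density)
qed

lemma integral_gauss_Id_translate:
  "f \<in> borel_measurable borel \<Longrightarrow> (\<integral>x. f x \<partial>gauss_Id \<mu>) = (\<integral>y. f (\<mu> + y) \<partial>gauss_Id 0)"
  for f :: "real ^ 'n::finite \<Rightarrow> real"
  by (subst gauss_Id_eq_distr_translate) (simp add: integral_distr)

lemma integrable_gauss_Id_translate_iff:
  "f \<in> borel_measurable borel \<Longrightarrow> integrable (gauss_Id \<mu>) f \<longleftrightarrow> integrable (gauss_Id 0) (\<lambda>y. f (\<mu> + y))"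
  for f :: "real ^ 'n::finite \<Rightarrow> real"
  by (subst gauss_Id_eq_distr_translate) (simp add: integrable_distr_eq)

lemma integral_gauss_Id_0_odd:
  fixes f :: "real ^ 'n::finite \<Rightarrow> real"
  assumes "f \<in> borel_measurable borel" "\<And>x. f (- x) = - f x"
  shows "(\<integral>x. f x \<partial>gauss_Id 0) = 0"
proof -
  have "(\<integral>x. f x \<partial>gauss_Id 0) = (\<integral>x. f (- x) \<partial>gauss_Id 0)"
    using assms(1) by (subst gauss_Id_0_eq_distr_uminus) (simp add: integral_distr)
  with assms(2) show ?thesis
    by simp
qed

lemma integral_gauss_Id_tilt:
  "f \<in> borel_measurable borel \<Longrightarrow>
    (\<integral>x. f x \<partial>gauss_Id v) = (\<integral>x. exp (v \<bullet> x - v \<bullet> v / 2) * f x \<partial>gauss_Id 0)"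
  for f :: "real ^ 'n::finite \<Rightarrow> real"
  by (subst gauss_Id_eq_density_tilt) (simp add: integral_density)

lemma integrable_gauss_Id_tilt_iff:
  "f \<in> borel_measurable borel \<Longrightarrow>
    integrable (gauss_Id v) f \<longleftrightarrow> integrable (gauss_Id 0) (\<lambda>x. exp (v \<bullet> x - v \<bullet> v / 2) * f x)"
  for f :: "real ^ 'n::finite \<Rightarrow> real"
  by (subst gauss_Id_eq_density_tilt) (simp add: integrable_density)

lemma integrable_gauss_Id_const [simp]: "integrable (gauss_Id \<mu>) (\<lambda>_. c :: real)"
proof -
  interpret prob_space "gauss_Id \<mu>"
    by (rule prob_space_gauss_Id)
  show ?thesis
    by simp
qed

lemma measure_gauss_Id_UNIV [simp]: "measure (gauss_Id \<mu>) UNIV = 1"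
proof -
  interpret prob_space "gauss_Id \<mu>"
    by (rule prob_space_gauss_Id)
  show ?thesis
    using prob_space by simp
qed

lemma integrable_gauss_Id_exp_inner: "integrable (gauss_Id \<mu>) (\<lambda>x. exp (v \<bullet> x))"
  for \<mu> v :: "real ^ 'n::finite"
proof -
  have "integrable (gauss_Id 0) (\<lambda>y. exp (v \<bullet> y - v \<bullet> v / 2) * 1)"
    using integrable_gauss_Id_const[of v 1]
    by (simp only: integrable_gauss_Id_tilt_iff[OF borel_measurable_const])
  moreover have "exp (v \<bullet> (\<mu> + y)) = exp (v \<bullet> \<mu> + v \<bullet> v / 2) * (exp (v \<bullet> y - v \<bullet> v / 2) * 1)" for y
    by (simp add: inner_add_right flip: exp_add)
  ultimately have "integrable (gauss_Id 0) (\<lambda>y. exp (v \<bullet> (\<mu> + y)))"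
    by (simp only: integrable_mult_right)
  then show ?thesis
    by (subst integrable_gauss_Id_translate_iff) auto
qed

lemma integral_gauss_Id_0_exp_inner: "(\<integral>x. exp (v \<bullet> x) \<partial>gauss_Id 0) = exp (v \<bullet> v / 2)"
  for v :: "real ^ 'n::finite"
proof -
  have "1 = (\<integral>x. (1 :: real) \<partial>gauss_Id v)"
    by simp
  also have "\<dots> = (\<integral>x. exp (v \<bullet> x - v \<bullet> v / 2) * 1 \<partial>gauss_Id 0)"
    by (rule integral_gauss_Id_tilt) simp
  also have "\<dots> = (\<integral>x. exp (v \<bullet> x) \<partial>gauss_Id 0) / exp (v \<bullet> v / 2)"
    by (simp add: exp_diff)
  finally show ?thesis
    by simp
qed

lemma integrable_gauss_Id_exp_abs_inner: "integrable (gauss_Id \<mu>) (\<lambda>x. exp \<bar>w \<bullet> x\<bar>)"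
  for \<mu> w :: "real ^ 'n::finite"
proof (rule Bochner_Integration.integrable_bound)
  show "integrable (gauss_Id \<mu>) (\<lambda>x. exp (w \<bullet> x) + exp ((- w) \<bullet> x))"
    by (intro Bochner_Integration.integrable_add integrable_gauss_Id_exp_inner)
  show "AE x in gauss_Id \<mu>. norm (exp \<bar>w \<bullet> x\<bar>) \<le> norm (exp (w \<bullet> x) + exp ((- w) \<bullet> x))"
  proof (intro AE_I2)
    fix x
    have "0 < exp (w \<bullet> x)" "0 < exp (- (w \<bullet> x))"
      by auto
    then show "norm (exp \<bar>w \<bullet> x\<bar>) \<le> norm (exp (w \<bullet> x) + exp ((- w) \<bullet> x))"
      by (cases "w \<bullet> x < 0") auto
  qed
qed simp

lemma integrable_gauss_Id_exp_bound:
  fixes f :: "real ^ 'n::finite \<Rightarrow> real"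
  assumes "f \<in> borel_measurable borel" "\<And>x. \<bar>f x\<bar> \<le> C * exp \<bar>w \<bullet> x\<bar> + D"
  shows "integrable (gauss_Id \<mu>) f"
proof (rule Bochner_Integration.integrable_bound)
  show "integrable (gauss_Id \<mu>) (\<lambda>x. C * exp \<bar>w \<bullet> x\<bar> + D)"
    by (intro Bochner_Integration.integrable_add integrable_mult_right
        integrable_gauss_Id_exp_abs_inner integrable_gauss_Id_const)
  show "AE x in gauss_Id \<mu>. norm (f x) \<le> norm (C * exp \<bar>w \<bullet> x\<bar> + D)"
  proof (intro AE_I2)
    fix x
    show "norm (f x) \<le> norm (C * exp \<bar>w \<bullet> x\<bar> + D)"
      using assms(2)[of x] abs_ge_self[of "C * exp \<bar>w \<bullet> x\<bar> + D"] by simp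
  qed
qed (use assms(1) in simp)

lemma integrable_gauss_Id_bounded:
  "f \<in> borel_measurable borel \<Longrightarrow> (\<And>x. \<bar>f x\<bar> \<le> B) \<Longrightarrow> integrable (gauss_Id \<mu>) f"
  for f :: "real ^ 'n::finite \<Rightarrow> real" and B :: real
  by (rule integrable_gauss_Id_exp_bound[where C = 0 and D = B]) auto

lemma integrable_gauss_Id_bounded_mult_inner:
  fixes f :: "real ^ 'n::finite \<Rightarrow> real"
  assumes "f \<in> borel_measurable borel" "\<And>x. \<bar>f x\<bar> \<le> B"
  shows "integrable (gauss_Id \<mu>) (\<lambda>x. f x * (v \<bullet> x))"
proof (rule integrable_gauss_Id_exp_bound[where C = B and D = 0 and w = v])
  fix x
  show "\<bar>f x * (v \<bullet> x)\<bar> \<le> B * exp \<bar>v \<bullet> x\<bar> + 0"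
    using mult_mono[OF assms(2)[of x] abs_le_exp_abs[of "v \<bullet> x"]] order_trans[OF abs_ge_zero assms(2)]
    by (simp add: abs_mult)
qed (use assms(1) in simp)

lemma integrable_gauss_Id_inner_self: "integrable (gauss_Id \<mu>) (\<lambda>x. x \<bullet> x)"
  for \<mu> :: "real ^ 'n::finite"
proof -
  have "integrable (gauss_Id \<mu>) (\<lambda>x. (v \<bullet> x)\<^sup>2)" for v :: "real ^ 'n"
  proof (rule integrable_gauss_Id_exp_bound[where C = 1 and D = 0 and w = "2 *\<^sub>R v"])
    fix x
    show "\<bar>(v \<bullet> x)\<^sup>2\<bar> \<le> 1 * exp \<bar>(2 *\<^sub>R v) \<bullet> x\<bar> + 0"
      using square_le_exp_abs[of "v \<bullet> x"] by (simp add: abs_mult)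
  qed simp
  then have "integrable (gauss_Id \<mu>) (\<lambda>x. \<Sum>i\<in>UNIV. (axis i 1 \<bullet> x)\<^sup>2)"
    by (intro Bochner_Integration.integrable_sum)
  moreover have "(\<Sum>i\<in>UNIV. (axis i 1 \<bullet> x)\<^sup>2) = x \<bullet> x" for x :: "real ^ 'n"
    by (simp add: inner_axis' inner_vec_def[of x x] power2_eq_square)
  ultimately show ?thesis
    by simp
qed

lemma integral_gauss_Id_pos:
  fixes f :: "real ^ 'n::finite \<Rightarrow> real"
  assumes cont: "continuous_on UNIV f" and nonneg: "\<And>x. 0 \<le> f x"
    and int: "integrable (gauss_Id \<mu>) f" and pos: "0 < f z"
  shows "0 < (\<integral>x. f x \<partial>gauss_Id \<mu>)"
proof (rule ccontr)
  have [measurable]: "f \<in> borel_measurable borel"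
    using cont by (rule borel_measurable_continuous_onI)
  assume "\<not> 0 < (\<integral>x. f x \<partial>gauss_Id \<mu>)"
  moreover have "0 \<le> (\<integral>x. f x \<partial>gauss_Id \<mu>)"
    by (rule integral_nonneg_AE) (simp add: nonneg)
  ultimately have "(\<integral>x. f x \<partial>gauss_Id \<mu>) = 0"
    by simp
  then have "AE x in gauss_Id \<mu>. f x = 0"
    using integral_nonneg_eq_0_iff_AE[OF int] nonneg by simp
  then have "AE x in lborel. 0 < ennreal (gauss_density \<mu> x) \<longrightarrow> f x = 0"
    unfolding gauss_Id_eq_density by (subst (asm) AE_density) auto
  then have "AE x in lborel. f x = 0"
    by (rule AE_mp) (auto intro!: AE_I2 simp: gauss_density_pos)
  then have "AE x in lebesgue. x \<in> {x. f x = 0}"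
    by (intro AE_completion) simp
  moreover have "closed {x. f x = 0}"
    using continuous_closed_preimage_constant[OF cont closed_UNIV, of 0] by simp
  ultimately have "z \<in> {x. f x = 0}"
    by (rule mem_closed_if_AE_lebesgue[rotated])
  with pos show False
    by simp
qed

section \<open>Gaussian integration by parts\<close>

lemma gauss_Id_tilt_expansion:
  fixes f :: "real ^ 'n::finite \<Rightarrow> real" and e :: "real ^ 'n" and B :: real
  assumes f_meas [measurable]: "f \<in> borel_measurable borel" and f_bound: "\<And>x. \<bar>f x\<bar> \<le> B"
  obtains K where "\<And>t. \<bar>t\<bar> \<le> 1 \<Longrightarrow>
    \<bar>(\<integral>x. f x \<partial>gauss_Id (t *\<^sub>R e)) - (\<integral>x. f x \<partial>gauss_Id 0) - t * (\<integral>x. f x * (e \<bullet> x) \<partial>gauss_Id 0)\<bar>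
      \<le> K * t\<^sup>2"
proof (rule that)
  define c where "c = e \<bullet> e / 2"
  define G where "G x = B * (exp (3 * c) * exp \<bar>(3 *\<^sub>R e) \<bullet> x\<bar> + c)" for x
  have "0 \<le> c"
    by (simp add: c_def)
  have "0 \<le> B"
    using f_bound[of 0] by simp
  have int_f: "integrable (gauss_Id \<mu>) f" for \<mu>
    using f_meas f_bound by (rule integrable_gauss_Id_bounded)
  have int_fe: "integrable (gauss_Id 0) (\<lambda>x. f x * (e \<bullet> x))"
    using f_meas f_bound by (rule integrable_gauss_Id_bounded_mult_inner)
  have int_G: "integrable (gauss_Id 0) G"
    unfolding G_def
    by (intro integrable_mult_right Bochner_Integration.integrable_add integrable_gauss_Id_const
        integrable_gauss_Id_exp_abs_inner)
  fix t :: real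
  assume "\<bar>t\<bar> \<le> 1"
  define R where "R x = exp (t * (e \<bullet> x) - t\<^sup>2 * c) - 1 - t * (e \<bullet> x)" for x
  have exponent: "(t *\<^sub>R e) \<bullet> x - (t *\<^sub>R e) \<bullet> (t *\<^sub>R e) / 2 = t * (e \<bullet> x) - t\<^sup>2 * c" for x
    by (simp add: c_def power2_eq_square)
  have tilt: "(\<integral>x. f x \<partial>gauss_Id (t *\<^sub>R e)) = (\<integral>x. exp (t * (e \<bullet> x) - t\<^sup>2 * c) * f x \<partial>gauss_Id 0)"
    using integral_gauss_Id_tilt[OF f_meas, of "t *\<^sub>R e"] by (simp only: exponent)
  have int_tilt: "integrable (gauss_Id 0) (\<lambda>x. exp (t * (e \<bullet> x) - t\<^sup>2 * c) * f x)"
    using int_f[of "t *\<^sub>R e"] integrable_gauss_Id_tilt_iff[OF f_meas, of "t *\<^sub>R e"]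
    by (simp only: exponent)
  have "(\<integral>x. f x \<partial>gauss_Id (t *\<^sub>R e)) - (\<integral>x. f x \<partial>gauss_Id 0) - t * (\<integral>x. f x * (e \<bullet> x) \<partial>gauss_Id 0)
      = (\<integral>x. exp (t * (e \<bullet> x) - t\<^sup>2 * c) * f x - f x - t * (f x * (e \<bullet> x)) \<partial>gauss_Id 0)"
    unfolding tilt using int_tilt int_f int_fe by simp
  also have "\<dots> = (\<integral>x. f x * R x \<partial>gauss_Id 0)"
    by (simp add: R_def algebra_simps)
  finally have expansion: "(\<integral>x. f x \<partial>gauss_Id (t *\<^sub>R e)) - (\<integral>x. f x \<partial>gauss_Id 0)
      - t * (\<integral>x. f x * (e \<bullet> x) \<partial>gauss_Id 0) = (\<integral>x. f x * R x \<partial>gauss_Id 0)" .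
  have "\<bar>\<integral>x. f x * R x \<partial>gauss_Id 0\<bar> \<le> (\<integral>x. t\<^sup>2 * G x \<partial>gauss_Id 0)"
  proof (rule integral_abs_bound_integral)
    have "integrable (gauss_Id 0) (\<lambda>x. exp (t * (e \<bullet> x) - t\<^sup>2 * c) * f x - f x - t * (f x * (e \<bullet> x)))"
      using int_tilt int_f int_fe by simp
    then show "integrable (gauss_Id 0) (\<lambda>x. f x * R x)"
      by (simp add: R_def algebra_simps)
    show "integrable (gauss_Id 0) (\<lambda>x. t\<^sup>2 * G x)"
      using int_G by simp
    fix x
    have "exp (3 * (\<bar>e \<bullet> x\<bar> + c)) = exp (3 * c) * exp \<bar>(3 *\<^sub>R e) \<bullet> x\<bar>"
      by (simp add: abs_mult distrib_left add.commute flip: exp_add)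
    then have "\<bar>R x\<bar> \<le> t\<^sup>2 * (exp (3 * c) * exp \<bar>(3 *\<^sub>R e) \<bullet> x\<bar> + c)"
      using exp_tilt_remainder[OF \<open>\<bar>t\<bar> \<le> 1\<close> \<open>0 \<le> c\<close>, of "e \<bullet> x"] by (simp add: R_def)
    then have "\<bar>f x\<bar> * \<bar>R x\<bar> \<le> B * (t\<^sup>2 * (exp (3 * c) * exp \<bar>(3 *\<^sub>R e) \<bullet> x\<bar> + c))"
      using f_bound[of x] \<open>0 \<le> B\<close> by (intro mult_mono) auto
    then show "\<bar>f x * R x\<bar> \<le> t\<^sup>2 * G x"
      by (simp add: G_def abs_mult mult_ac)
  qed
  also have "\<dots> = (\<integral>x. G x \<partial>gauss_Id 0) * t\<^sup>2"
    by simp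
  finally show "\<bar>(\<integral>x. f x \<partial>gauss_Id (t *\<^sub>R e)) - (\<integral>x. f x \<partial>gauss_Id 0)
      - t * (\<integral>x. f x * (e \<bullet> x) \<partial>gauss_Id 0)\<bar>
      \<le> (\<integral>x. G x \<partial>gauss_Id 0) * t\<^sup>2"
    by (simp only: expansion)
qed

lemma borel_measurable_if_has_real_derivative:
  "(\<And>y. (g has_real_derivative g' y) (at y)) \<Longrightarrow> g \<in> borel_measurable borel"
  by (intro borel_measurable_continuous_onI continuous_at_imp_continuous_on ballI DERIV_isCont) blast

lemma gauss_Id_translate_expansion:
  fixes g g' g'' :: "real \<Rightarrow> real" and \<theta> e :: "real ^ 'n::finite"
  assumes g: "\<And>y. (g has_real_derivative g' y) (at y)"
    and g': "\<And>y. (g' has_real_derivative g'' y) (at y)"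
    and g_bound: "\<And>y. \<bar>g y\<bar> \<le> B" and g'_bound: "\<And>y. \<bar>g' y\<bar> \<le> B'" and g''_bound: "\<And>y. \<bar>g'' y\<bar> \<le> M"
  shows "\<bar>(\<integral>x. g (\<theta> \<bullet> x) \<partial>gauss_Id (t *\<^sub>R e)) - (\<integral>x. g (\<theta> \<bullet> x) \<partial>gauss_Id 0)
      - t * ((\<theta> \<bullet> e) * (\<integral>x. g' (\<theta> \<bullet> x) \<partial>gauss_Id 0))\<bar> \<le> M / 2 * (\<theta> \<bullet> e)\<^sup>2 * t\<^sup>2"
proof -
  have [measurable]: "g \<in> borel_measurable borel" "g' \<in> borel_measurable borel"
    using g g' by (auto intro: borel_measurable_if_has_real_derivative)
  define s where "s = t * (\<theta> \<bullet> e)"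
  have int_g: "integrable (gauss_Id 0) (\<lambda>x. g (\<theta> \<bullet> x + b))" for b
    by (rule integrable_gauss_Id_bounded[where B = B]) (auto simp: g_bound)
  have int_g': "integrable (gauss_Id 0) (\<lambda>x. g' (\<theta> \<bullet> x))"
    by (rule integrable_gauss_Id_bounded[where B = B']) (auto simp: g'_bound)
  have "(\<integral>x. g (\<theta> \<bullet> x) \<partial>gauss_Id (t *\<^sub>R e)) = (\<integral>x. g (\<theta> \<bullet> x + s) \<partial>gauss_Id 0)"
    by (subst integral_gauss_Id_translate) (simp_all add: s_def inner_add_right add.commute)
  then have "(\<integral>x. g (\<theta> \<bullet> x) \<partial>gauss_Id (t *\<^sub>R e)) - (\<integral>x. g (\<theta> \<bullet> x) \<partial>gauss_Id 0)
      - t * ((\<theta> \<bullet> e) * (\<integral>x. g' (\<theta> \<bullet> x) \<partial>gauss_Id 0))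
      = (\<integral>x. g (\<theta> \<bullet> x + s) - g (\<theta> \<bullet> x) - s * g' (\<theta> \<bullet> x) \<partial>gauss_Id 0)"
    using int_g[of s] int_g[of 0] int_g' by (simp add: s_def mult.assoc)
  also have "\<bar>\<dots>\<bar> \<le> (\<integral>x. M / 2 * s\<^sup>2 \<partial>gauss_Id (0 :: real ^ 'n))"
  proof (rule integral_abs_bound_integral)
    show "integrable (gauss_Id 0) (\<lambda>x. g (\<theta> \<bullet> x + s) - g (\<theta> \<bullet> x) - s * g' (\<theta> \<bullet> x))"
      using int_g[of s] int_g[of 0] int_g' by simp
    show "\<bar>g (\<theta> \<bullet> x + s) - g (\<theta> \<bullet> x) - s * g' (\<theta> \<bullet> x)\<bar> \<le> M / 2 * s\<^sup>2" for x
      using taylor_quadratic_remainder[OF g g', of "\<theta> \<bullet> x" s M] g''_bound by simp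
  qed simp
  finally show ?thesis
    by (simp add: s_def power_mult_distrib mult_ac)
qed

text \<open>Differentiate \<open>t \<mapsto> \<integral>x. g (\<theta> \<bullet> x) \<partial>gauss_Id (t *\<^sub>R e)\<close> at \<open>0\<close> once through the
  translation and once through the tilted density, and compare the two first-order expansions.\<close>
lemma gaussian_integration_by_parts:
  fixes g g' g'' :: "real \<Rightarrow> real" and \<theta> e :: "real ^ 'n::finite"
  assumes g: "\<And>y. (g has_real_derivative g' y) (at y)"
    and g': "\<And>y. (g' has_real_derivative g'' y) (at y)"
    and g_bound: "\<And>y. \<bar>g y\<bar> \<le> B" and g'_bound: "\<And>y. \<bar>g' y\<bar> \<le> B'" and g''_bound: "\<And>y. \<bar>g'' y\<bar> \<le> M"
  shows "(\<integral>x. g (\<theta> \<bullet> x) * (e \<bullet> x) \<partial>gauss_Id 0) = (\<theta> \<bullet> e) * (\<integral>x. g' (\<theta> \<bullet> x) \<partial>gauss_Id 0)"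
proof -
  have [measurable]: "g \<in> borel_measurable borel"
    using g by (rule borel_measurable_if_has_real_derivative)
  obtain K where tilt: "\<And>t. \<bar>t\<bar> \<le> 1 \<Longrightarrow>
      \<bar>(\<integral>x. g (\<theta> \<bullet> x) \<partial>gauss_Id (t *\<^sub>R e)) - (\<integral>x. g (\<theta> \<bullet> x) \<partial>gauss_Id 0)
        - t * (\<integral>x. g (\<theta> \<bullet> x) * (e \<bullet> x) \<partial>gauss_Id 0)\<bar> \<le> K * t\<^sup>2"
    using gauss_Id_tilt_expansion[of "\<lambda>x. g (\<theta> \<bullet> x)" B e] g_bound by auto
  let ?A = "\<integral>x. g (\<theta> \<bullet> x) * (e \<bullet> x) \<partial>gauss_Id 0"
  let ?S = "(\<theta> \<bullet> e) * (\<integral>x. g' (\<theta> \<bullet> x) \<partial>gauss_Id 0)"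
  have "?A - ?S = 0"
  proof (rule eq_0_if_abs_le_quadratic)
    fix t :: real
    assume "0 < t" "t \<le> 1"
    let ?D = "(\<integral>x. g (\<theta> \<bullet> x) \<partial>gauss_Id (t *\<^sub>R e)) - (\<integral>x. g (\<theta> \<bullet> x) \<partial>gauss_Id 0)"
    have "t * (?A - ?S) = (?D - t * ?S) - (?D - t * ?A)"
      by (simp add: algebra_simps)
    then have "\<bar>t * (?A - ?S)\<bar> \<le> \<bar>?D - t * ?S\<bar> + \<bar>?D - t * ?A\<bar>"
      by (simp only: abs_triangle_ineq4)
    also have "\<dots> \<le> M / 2 * (\<theta> \<bullet> e)\<^sup>2 * t\<^sup>2 + K * t\<^sup>2"
      using gauss_Id_translate_expansion[OF g g' g_bound g'_bound g''_bound,
          where \<theta> = \<theta> and t = t and e = e] tilt[of t]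
        \<open>0 < t\<close> \<open>t \<le> 1\<close> by simp
    finally show "\<bar>t * (?A - ?S)\<bar> \<le> (M / 2 * (\<theta> \<bullet> e)\<^sup>2 + K) * t\<^sup>2"
      by (simp add: distrib_right)
  qed
  then show ?thesis
    by simp
qed

lemma integrable_gauss_Id_tanh_inner [simp]: "integrable (gauss_Id \<mu>) (\<lambda>x. tanh (\<theta> \<bullet> x))"
  for \<mu> \<theta> :: "real ^ 'n::finite"
  by (rule integrable_gauss_Id_bounded[where B = 1]) (auto simp: abs_tanh_real_le_1)

lemma integrable_gauss_Id_tanh_inner_square [simp]: "integrable (gauss_Id \<mu>) (\<lambda>x. (tanh (\<theta> \<bullet> x))\<^sup>2)"
  for \<mu> \<theta> :: "real ^ 'n::finite"
  by (rule integrable_gauss_Id_bounded[where B = 1]) (auto simp: tanh_real_square_le_1)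

lemma integrable_gauss_Id_tanh_mult_inner [simp]:
  "integrable (gauss_Id \<mu>) (\<lambda>x. tanh (\<theta> \<bullet> x) * (h \<bullet> x))"
  for \<mu> \<theta> h :: "real ^ 'n::finite"
  by (rule integrable_gauss_Id_bounded_mult_inner[where B = 1]) (auto simp: abs_tanh_real_le_1)

lemma integrable_gauss_Id_ln_cosh_inner [simp]: "integrable (gauss_Id \<mu>) (\<lambda>x. ln (cosh (\<theta> \<bullet> x)))"
  for \<mu> \<theta> :: "real ^ 'n::finite"
proof (rule integrable_gauss_Id_exp_bound[where C = 1 and D = 0 and w = \<theta>])
  fix x
  show "\<bar>ln (cosh (\<theta> \<bullet> x))\<bar> \<le> 1 * exp \<bar>\<theta> \<bullet> x\<bar> + 0"
    using ln_cosh_nonneg[of "\<theta> \<bullet> x"] ln_cosh_le_abs[of "\<theta> \<bullet> x"] abs_le_exp_abs[of "\<theta> \<bullet> x"] by simp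
qed simp

lemma integral_tanh_mult_inner:
  fixes \<mu> \<theta> h :: "real ^ 'n::finite"
  shows "(\<integral>x. tanh (\<theta> \<bullet> x) * (h \<bullet> x) \<partial>gauss_Id \<mu>)
    = (\<theta> \<bullet> h) * (\<integral>x. 1 - (tanh (\<theta> \<bullet> x))\<^sup>2 \<partial>gauss_Id \<mu>) + (h \<bullet> \<mu>) * (\<integral>x. tanh (\<theta> \<bullet> x) \<partial>gauss_Id \<mu>)"
proof -
  define b where "b = \<theta> \<bullet> \<mu>"
  have tanh_b: "((\<lambda>y. tanh (y + b)) has_real_derivative 1 - (tanh (y + b))\<^sup>2) (at y)" for y
    using has_real_derivative_tanh[of "y + b"] by (simp add: DERIV_shift)
  have sech_b: "((\<lambda>y. 1 - (tanh (y + b))\<^sup>2)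
      has_real_derivative - 2 * tanh (y + b) * (1 - (tanh (y + b))\<^sup>2)) (at y)"
    for y
    using has_real_derivative_sech_square[of "y + b"] by (simp add: DERIV_shift)
  have "(\<integral>x. tanh (\<theta> \<bullet> x) * (h \<bullet> x) \<partial>gauss_Id \<mu>)
      = (\<integral>x. tanh (\<theta> \<bullet> x) * (h \<bullet> x) - (h \<bullet> \<mu>) * tanh (\<theta> \<bullet> x) \<partial>gauss_Id \<mu>)
        + (h \<bullet> \<mu>) * (\<integral>x. tanh (\<theta> \<bullet> x) \<partial>gauss_Id \<mu>)"
    by simp
  also have "(\<integral>x. tanh (\<theta> \<bullet> x) * (h \<bullet> x) - (h \<bullet> \<mu>) * tanh (\<theta> \<bullet> x) \<partial>gauss_Id \<mu>)
      = (\<integral>y. tanh (\<theta> \<bullet> y + b) * (h \<bullet> y) \<partial>gauss_Id 0)"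
    by (subst integral_gauss_Id_translate) (simp_all add: b_def inner_add_right algebra_simps)
  also have "\<dots> = (\<theta> \<bullet> h) * (\<integral>y. 1 - (tanh (\<theta> \<bullet> y + b))\<^sup>2 \<partial>gauss_Id 0)"
    by (rule gaussian_integration_by_parts[OF tanh_b sech_b, where B = 1 and B' = 1 and M = 2])
      (use abs_tanh_real_le_1 tanh_real_square_le_1 abs_deriv_sech_square_le_2 in auto)
  also have "(\<integral>y. 1 - (tanh (\<theta> \<bullet> y + b))\<^sup>2 \<partial>gauss_Id 0) = (\<integral>x. 1 - (tanh (\<theta> \<bullet> x))\<^sup>2 \<partial>gauss_Id \<mu>)"
    by (subst integral_gauss_Id_translate[of _ \<mu>]) (simp_all add: b_def inner_add_right add.commute)
  finally show ?thesis .
qed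

lemma exp_minus_mult_one_plus_tanh: "exp (- y) * (1 + tanh y) = exp y * (1 - tanh y)" for y :: real
proof -
  have "0 < exp y + exp (- y)"
    by (simp add: add_pos_pos)
  then have "tanh y * (exp y + exp (- y)) = exp y - exp (- y)"
    by (simp add: tanh_def sinh_def cosh_def field_simps)
  then show ?thesis
    by (simp add: algebra_simps)
qed

text \<open>Under the tilt \<open>gauss_Id \<theta>0 = exp (\<theta>0 \<bullet> x - \<theta>0 \<bullet> \<theta>0 / 2) \<cdot> gauss_Id 0\<close> the difference
  of the two integrands becomes an odd function.\<close>
lemma nishimori_identity:
  fixes \<theta>0 :: "real ^ 'n::finite"
  shows "(\<integral>x. tanh (\<theta>0 \<bullet> x) \<partial>gauss_Id \<theta>0) = (\<integral>x. (tanh (\<theta>0 \<bullet> x))\<^sup>2 \<partial>gauss_Id \<theta>0)"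
proof -
  define c where "c = \<theta>0 \<bullet> \<theta>0 / 2"
  have "(\<integral>x. tanh (\<theta>0 \<bullet> x) - (tanh (\<theta>0 \<bullet> x))\<^sup>2 \<partial>gauss_Id \<theta>0)
      = (\<integral>x. exp (\<theta>0 \<bullet> x - c) * (tanh (\<theta>0 \<bullet> x) - (tanh (\<theta>0 \<bullet> x))\<^sup>2) \<partial>gauss_Id 0)"
    unfolding c_def by (rule integral_gauss_Id_tilt) simp
  also have "\<dots> = 0"
  proof (rule integral_gauss_Id_0_odd)
    fix x :: "real ^ 'n"
    define y where "y = \<theta>0 \<bullet> x"
    have "exp (- y - c) * (- tanh y - (tanh y)\<^sup>2) = - (exp (- c) * tanh y * (exp (- y) * (1 + tanh y)))"
      by (simp add: exp_diff exp_minus power2_eq_square field_simps)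
    also have "\<dots> = - (exp (- c) * tanh y * (exp y * (1 - tanh y)))"
      by (simp only: exp_minus_mult_one_plus_tanh)
    also have "\<dots> = - (exp (y - c) * (tanh y - (tanh y)\<^sup>2))"
      by (simp add: exp_diff exp_minus power2_eq_square field_simps)
    finally show "exp (\<theta>0 \<bullet> - x - c) * (tanh (\<theta>0 \<bullet> - x) - (tanh (\<theta>0 \<bullet> - x))\<^sup>2)
        = - (exp (\<theta>0 \<bullet> x - c) * (tanh (\<theta>0 \<bullet> x) - (tanh (\<theta>0 \<bullet> x))\<^sup>2))"
      by (simp add: y_def)
  qed simp
  finally show ?thesis
    by simp
qed

lemma integral_tanh_mult_inner_at_mean:
  "(\<integral>x. tanh (\<theta>0 \<bullet> x) * (h \<bullet> x) \<partial>gauss_Id \<theta>0) = \<theta>0 \<bullet> h"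
proof -
  have "(\<integral>x. 1 - (tanh (\<theta>0 \<bullet> x))\<^sup>2 \<partial>gauss_Id \<theta>0) = 1 - (\<integral>x. (tanh (\<theta>0 \<bullet> x))\<^sup>2 \<partial>gauss_Id \<theta>0)"
    by simp
  then show ?thesis
    using integral_tanh_mult_inner[of \<theta>0 \<theta>0 h] nishimori_identity[of \<theta>0]
    by (simp add: inner_commute[of h \<theta>0] algebra_simps)
qed

section \<open>Differentiability of \<open>N_inf\<close>\<close>

lemma has_derivative_if_quadratic_remainder:
  fixes F :: "'a::euclidean_space \<Rightarrow> real"
  assumes "linear L" and remainder: "\<And>h. \<bar>F (x + h) - F x - L h\<bar> \<le> K * (norm h)\<^sup>2"
  shows "(F has_derivative L) (at x)"
  unfolding has_derivative_iff_norm
proof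
  show "bounded_linear L"
    using \<open>linear L\<close> by (simp add: linear_conv_bounded_linear)
  show "((\<lambda>y. norm (F y - F x - L (y - x)) / norm (y - x)) \<longlongrightarrow> 0) (at x)"
  proof (rule Lim_null_comparison)
    show "\<forall>\<^sub>F y in at x. norm (norm (F y - F x - L (y - x)) / norm (y - x)) \<le> K * norm (y - x)"
    proof (intro always_eventually allI)
      fix y
      show "norm (norm (F y - F x - L (y - x)) / norm (y - x)) \<le> K * norm (y - x)"
      proof (cases "y = x")
        case False
        then have "0 < norm (y - x)"
          by simp
        moreover have "\<bar>F y - F x - L (y - x)\<bar> \<le> K * (norm (y - x))\<^sup>2"
          using remainder[of "y - x"] by simp
        ultimately show ?thesis
          by (simp add: divide_le_eq power2_eq_square mult.assoc)
      qed simp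
    qed
    have "((\<lambda>y. K * norm (y - x)) \<longlongrightarrow> K * norm (x - x)) (at x)"
      by (intro tendsto_intros)
    then show "((\<lambda>y. K * norm (y - x)) \<longlongrightarrow> 0) (at x)"
      by simp
  qed
qed

definition N_inf_deriv :: "real ^ 'n::finite \<Rightarrow> real ^ 'n \<Rightarrow> real ^ 'n \<Rightarrow> real" where
  "N_inf_deriv \<theta>0 \<theta> h = \<theta> \<bullet> h - (\<integral>x. tanh (\<theta> \<bullet> x) * (h \<bullet> x) \<partial>gauss_Id \<theta>0)"

lemma linear_N_inf_deriv: "linear (N_inf_deriv \<theta>0 \<theta>)"
  for \<theta>0 \<theta> :: "real ^ 'n::finite"
proof (rule linearI)
  fix h h' :: "real ^ 'n" and r :: real
  show "N_inf_deriv \<theta>0 \<theta> (h + h') = N_inf_deriv \<theta>0 \<theta> h + N_inf_deriv \<theta>0 \<theta> h'"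
    using Bochner_Integration.integral_add
        [OF integrable_gauss_Id_tanh_mult_inner integrable_gauss_Id_tanh_mult_inner, of \<theta>0 \<theta> h h']
    by (simp add: N_inf_deriv_def inner_add_left inner_add_right distrib_left)
  show "N_inf_deriv \<theta>0 \<theta> (r *\<^sub>R h) = r *\<^sub>R N_inf_deriv \<theta>0 \<theta> h"
    by (simp add: N_inf_deriv_def algebra_simps)
qed

lemma integral_ln_cosh_inner_expansion:
  fixes \<mu> \<theta> h :: "real ^ 'n::finite"
  shows "\<bar>(\<integral>x. ln (cosh ((\<theta> + h) \<bullet> x)) \<partial>gauss_Id \<mu>) - (\<integral>x. ln (cosh (\<theta> \<bullet> x)) \<partial>gauss_Id \<mu>)
      - (\<integral>x. tanh (\<theta> \<bullet> x) * (h \<bullet> x) \<partial>gauss_Id \<mu>)\<bar>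
    \<le> (\<integral>x. x \<bullet> x \<partial>gauss_Id \<mu>) / 2 * (norm h)\<^sup>2"
proof -
  have "(\<integral>x. ln (cosh ((\<theta> + h) \<bullet> x)) \<partial>gauss_Id \<mu>) - (\<integral>x. ln (cosh (\<theta> \<bullet> x)) \<partial>gauss_Id \<mu>)
      - (\<integral>x. tanh (\<theta> \<bullet> x) * (h \<bullet> x) \<partial>gauss_Id \<mu>)
      = (\<integral>x. ln (cosh ((\<theta> + h) \<bullet> x)) - ln (cosh (\<theta> \<bullet> x)) - tanh (\<theta> \<bullet> x) * (h \<bullet> x) \<partial>gauss_Id \<mu>)"
    by simp
  also have "\<bar>\<dots>\<bar> \<le> (\<integral>x. (norm h)\<^sup>2 / 2 * (x \<bullet> x) \<partial>gauss_Id \<mu>)"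
  proof (rule integral_abs_bound_integral)
    show "integrable (gauss_Id \<mu>) (\<lambda>x. (norm h)\<^sup>2 / 2 * (x \<bullet> x))"
      by (intro integrable_mult_right integrable_gauss_Id_inner_self)
    fix x :: "real ^ 'n"
    have "\<bar>ln (cosh (\<theta> \<bullet> x + h \<bullet> x)) - ln (cosh (\<theta> \<bullet> x)) - (h \<bullet> x) * tanh (\<theta> \<bullet> x)\<bar> \<le> (h \<bullet> x)\<^sup>2 / 2"
      by (rule ln_cosh_taylor)
    also have "(h \<bullet> x)\<^sup>2 \<le> (norm h)\<^sup>2 * (x \<bullet> x)"
      using Cauchy_Schwarz_ineq[of h x] by (simp add: dot_square_norm)
    finally show "\<bar>ln (cosh ((\<theta> + h) \<bullet> x)) - ln (cosh (\<theta> \<bullet> x)) - tanh (\<theta> \<bullet> x) * (h \<bullet> x)\<bar>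
        \<le> (norm h)\<^sup>2 / 2 * (x \<bullet> x)"
      by (simp add: inner_add_left mult.commute)
  qed simp
  finally show ?thesis
    by (simp add: mult_ac)
qed

lemma N_inf_has_derivative: "(N_inf \<theta>0 has_derivative N_inf_deriv \<theta>0 \<theta>) (at \<theta>)"
  for \<theta>0 \<theta> :: "real ^ 'n::finite"
proof (rule has_derivative_if_quadratic_remainder[OF linear_N_inf_deriv])
  fix h :: "real ^ 'n"
  let ?L = "\<lambda>\<theta>. \<integral>x. ln (cosh (\<theta> \<bullet> x)) \<partial>gauss_Id \<theta>0"
  let ?K = "\<integral>x. x \<bullet> x \<partial>gauss_Id \<theta>0"
  let ?X = "?L (\<theta> + h) - ?L \<theta> - (\<integral>x. tanh (\<theta> \<bullet> x) * (h \<bullet> x) \<partial>gauss_Id \<theta>0)"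
  have "N_inf \<theta>0 (\<theta> + h) - N_inf \<theta>0 \<theta> - N_inf_deriv \<theta>0 \<theta> h = h \<bullet> h / 2 - ?X"
    by (simp add: N_inf_def N_inf_deriv_def inner_add_left inner_add_right inner_commute[of h \<theta>]
        field_simps)
  also have "\<bar>\<dots>\<bar> \<le> \<bar>h \<bullet> h / 2\<bar> + ?K / 2 * (norm h)\<^sup>2"
    using integral_ln_cosh_inner_expansion[of \<theta>0 \<theta> h] abs_triangle_ineq4[of "h \<bullet> h / 2" ?X]
    by linarith
  also have "\<dots> = (1 / 2 + ?K / 2) * (norm h)\<^sup>2"
    by (simp add: dot_square_norm algebra_simps)
  finally show "\<bar>N_inf \<theta>0 (\<theta> + h) - N_inf \<theta>0 \<theta> - N_inf_deriv \<theta>0 \<theta> h\<bar> \<le> (1 / 2 + ?K / 2) * (norm h)\<^sup>2" .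
qed

section \<open>The strict minimum at \<open>\<theta>0\<close>\<close>

lemma Theta1_nonzero: "\<theta> \<in> Theta1 \<Longrightarrow> \<theta> \<noteq> 0"
  unfolding Theta1_def by auto

lemma Theta1_uminus: "\<theta> \<in> Theta1 \<Longrightarrow> - \<theta> \<notin> Theta1"
  unfolding Theta1_def
  by (auto, metis linorder_cases neg_0_less_iff_less order_less_asym vector_uminus_component)

lemma Theta1_scaleR:
  assumes "\<theta> \<in> Theta1" "0 < c"
  shows "c *\<^sub>R \<theta> \<in> Theta1"
proof -
  obtain k where "0 < \<theta> $ k" "\<forall>j<k. \<theta> $ j = 0"
    using assms(1) unfolding Theta1_def by blast
  then show ?thesis
    unfolding Theta1_def using assms(2) by (auto intro!: exI[of _ k])
qed

text \<open>The ratio at \<open>x\<close> of the densities of the symmetric mixtures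
  \<open>(N(\<theta>, I) + N(-\<theta>, I)) / 2\<close> and \<open>(N(\<theta>0, I) + N(-\<theta>0, I)) / 2\<close>.\<close>
definition mixture_ratio :: "real ^ 'n::finite \<Rightarrow> real ^ 'n \<Rightarrow> real ^ 'n \<Rightarrow> real" where
  "mixture_ratio \<theta>0 \<theta> x = exp (\<theta>0 \<bullet> \<theta>0 / 2 - \<theta> \<bullet> \<theta> / 2) * cosh (\<theta> \<bullet> x) / cosh (\<theta>0 \<bullet> x)"

lemma mixture_ratio_pos: "0 < mixture_ratio \<theta>0 \<theta> x"
  by (simp add: mixture_ratio_def)

lemma continuous_on_mixture_ratio: "continuous_on UNIV (mixture_ratio \<theta>0 \<theta>)"
  unfolding mixture_ratio_def
  by (intro continuous_intros) (auto simp: less_imp_neq[OF cosh_real_pos, symmetric])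

lemma borel_measurable_mixture_ratio [measurable]: "mixture_ratio \<theta>0 \<theta> \<in> borel_measurable borel"
  unfolding mixture_ratio_def by measurable

lemma ln_mixture_ratio:
  "ln (mixture_ratio \<theta>0 \<theta> x) = \<theta>0 \<bullet> \<theta>0 / 2 - \<theta> \<bullet> \<theta> / 2 + ln (cosh (\<theta> \<bullet> x)) - ln (cosh (\<theta>0 \<bullet> x))"
  by (simp add: mixture_ratio_def ln_div ln_mult)

lemma integrable_gauss_Id_mixture_ratio: "integrable (gauss_Id \<mu>) (mixture_ratio \<theta>0 \<theta>)"
proof (rule integrable_gauss_Id_exp_bound[where C = "exp (\<theta>0 \<bullet> \<theta>0 / 2 - \<theta> \<bullet> \<theta> / 2)" and D = 0 and w = \<theta>])
  fix x
  have "mixture_ratio \<theta>0 \<theta> x \<le> exp (\<theta>0 \<bullet> \<theta>0 / 2 - \<theta> \<bullet> \<theta> / 2) * cosh (\<theta> \<bullet> x) / 1"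
    unfolding mixture_ratio_def using cosh_real_ge_1[of "\<theta>0 \<bullet> x"] by (intro divide_left_mono) auto
  also have "\<dots> \<le> exp (\<theta>0 \<bullet> \<theta>0 / 2 - \<theta> \<bullet> \<theta> / 2) * exp \<bar>\<theta> \<bullet> x\<bar>"
    using cosh_real_le_exp_abs[of "\<theta> \<bullet> x"] by simp
  finally show "\<bar>mixture_ratio \<theta>0 \<theta> x\<bar> \<le> exp (\<theta>0 \<bullet> \<theta>0 / 2 - \<theta> \<bullet> \<theta> / 2) * exp \<bar>\<theta> \<bullet> x\<bar> + 0"
    using mixture_ratio_pos[of \<theta>0 \<theta> x] by simp
qed simp

lemma integrable_gauss_Id_cosh_inner: "integrable (gauss_Id \<mu>) (\<lambda>x. cosh (\<theta> \<bullet> x))"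
  for \<mu> \<theta> :: "real ^ 'n::finite"
  by (rule integrable_gauss_Id_exp_bound[where C = 1 and D = 0 and w = \<theta>])
    (simp_all add: cosh_real_le_exp_abs)

lemma integrable_gauss_Id_tanh_mult_cosh: "integrable (gauss_Id \<mu>) (\<lambda>x. tanh (v \<bullet> x) * cosh (\<theta> \<bullet> x))"
  for \<mu> \<theta> v :: "real ^ 'n::finite"
proof (rule integrable_gauss_Id_exp_bound[where C = 1 and D = 0 and w = \<theta>])
  fix x
  have "\<bar>tanh (v \<bullet> x)\<bar> * cosh (\<theta> \<bullet> x) \<le> 1 * exp \<bar>\<theta> \<bullet> x\<bar>"
    using abs_tanh_real_le_1 cosh_real_le_exp_abs by (intro mult_mono) auto
  then show "\<bar>tanh (v \<bullet> x) * cosh (\<theta> \<bullet> x)\<bar> \<le> 1 * exp \<bar>\<theta> \<bullet> x\<bar> + 0"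
    by (simp add: abs_mult)
qed simp

lemma integral_gauss_Id_0_cosh_inner: "(\<integral>x. cosh (\<theta> \<bullet> x) \<partial>gauss_Id 0) = exp (\<theta> \<bullet> \<theta> / 2)"
  for \<theta> :: "real ^ 'n::finite"
proof -
  have "(\<integral>x. cosh (\<theta> \<bullet> x) \<partial>gauss_Id 0) = (\<integral>x. (exp (\<theta> \<bullet> x) + exp ((- \<theta>) \<bullet> x)) / 2 \<partial>gauss_Id 0)"
    by (simp add: cosh_def)
  also have "\<dots> = exp (\<theta> \<bullet> \<theta> / 2)"
    using integrable_gauss_Id_exp_inner[of 0 \<theta>] integrable_gauss_Id_exp_inner[of 0 "- \<theta>"]
    by (simp only: integral_divide_zero Bochner_Integration.integral_add
        integral_gauss_Id_0_exp_inner) simp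
  finally show ?thesis .
qed

lemma integral_gauss_Id_mixture_ratio: "(\<integral>x. mixture_ratio \<theta>0 \<theta> x \<partial>gauss_Id \<theta>0) = 1"
  for \<theta>0 \<theta> :: "real ^ 'n::finite"
proof -
  define c0 c where "c0 = \<theta>0 \<bullet> \<theta>0 / 2" and "c = \<theta> \<bullet> \<theta> / 2"
  have ratio: "mixture_ratio \<theta>0 \<theta> x = exp (c0 - c) * cosh (\<theta> \<bullet> x) / cosh (\<theta>0 \<bullet> x)" for x
    by (simp add: mixture_ratio_def c0_def c_def)
  have "(\<integral>x. mixture_ratio \<theta>0 \<theta> x \<partial>gauss_Id \<theta>0)
      = (\<integral>x. exp (\<theta>0 \<bullet> x - c0) * mixture_ratio \<theta>0 \<theta> x \<partial>gauss_Id 0)"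
    unfolding c0_def by (rule integral_gauss_Id_tilt) simp
  also have "\<dots> = (\<integral>x. exp (- c) * cosh (\<theta> \<bullet> x) + exp (- c) * (tanh (\<theta>0 \<bullet> x) * cosh (\<theta> \<bullet> x)) \<partial>gauss_Id 0)"
  proof (rule Bochner_Integration.integral_cong)
    fix x :: "real ^ 'n"
    have "exp (\<theta>0 \<bullet> x) = cosh (\<theta>0 \<bullet> x) + sinh (\<theta>0 \<bullet> x)"
      by (simp add: cosh_plus_sinh)
    then have "exp (\<theta>0 \<bullet> x - c0) * mixture_ratio \<theta>0 \<theta> x
        = exp (- c) * ((cosh (\<theta>0 \<bullet> x) + sinh (\<theta>0 \<bullet> x)) * cosh (\<theta> \<bullet> x) / cosh (\<theta>0 \<bullet> x))"
      by (simp add: ratio exp_diff exp_minus field_simps)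
    also have "\<dots> = exp (- c) * cosh (\<theta> \<bullet> x) + exp (- c) * (tanh (\<theta>0 \<bullet> x) * cosh (\<theta> \<bullet> x))"
      using cosh_real_pos[of "\<theta>0 \<bullet> x"] by (simp add: tanh_def field_simps)
    finally show "exp (\<theta>0 \<bullet> x - c0) * mixture_ratio \<theta>0 \<theta> x
        = exp (- c) * cosh (\<theta> \<bullet> x) + exp (- c) * (tanh (\<theta>0 \<bullet> x) * cosh (\<theta> \<bullet> x))" .
  qed simp
  also have "\<dots> = exp (- c) * (\<integral>x. cosh (\<theta> \<bullet> x) \<partial>gauss_Id 0)
      + exp (- c) * (\<integral>x. tanh (\<theta>0 \<bullet> x) * cosh (\<theta> \<bullet> x) \<partial>gauss_Id 0)"
    by (subst Bochner_Integration.integral_add)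
      (auto intro: integrable_gauss_Id_cosh_inner integrable_gauss_Id_tanh_mult_cosh)
  also have "(\<integral>x. tanh (\<theta>0 \<bullet> x) * cosh (\<theta> \<bullet> x) \<partial>gauss_Id 0) = 0"
    by (rule integral_gauss_Id_0_odd) simp_all
  finally show ?thesis
    by (simp add: integral_gauss_Id_0_cosh_inner c_def exp_minus)
qed

lemma N_inf_diff_eq_integral:
  fixes \<theta>0 \<theta> :: "real ^ 'n::finite"
  shows "N_inf \<theta>0 \<theta> - N_inf \<theta>0 \<theta>0
    = (\<integral>x. mixture_ratio \<theta>0 \<theta> x - 1 - ln (mixture_ratio \<theta>0 \<theta> x) \<partial>gauss_Id \<theta>0)"
  using integrable_gauss_Id_mixture_ratio[of \<theta>0 \<theta>0 \<theta>]
  by (simp add: ln_mixture_ratio integral_gauss_Id_mixture_ratio N_inf_def)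

lemma mixture_ratio_eq_1_imp:
  fixes \<theta>0 \<theta> :: "real ^ 'n::finite"
  assumes "\<And>x. mixture_ratio \<theta>0 \<theta> x = 1"
  shows "\<theta> = \<theta>0 \<or> \<theta> = - \<theta>0"
proof -
  have norms: "\<theta> \<bullet> \<theta> = \<theta>0 \<bullet> \<theta>0"
    using assms[of 0] by (simp add: mixture_ratio_def)
  then have "cosh (\<theta> \<bullet> x) = cosh (\<theta>0 \<bullet> x)" for x
    using assms[of x] by (simp add: mixture_ratio_def)
  then have "\<bar>\<theta> \<bullet> \<theta>\<bar> = \<bar>\<theta>0 \<bullet> \<theta>\<bar>"
    by simp
  then have "\<theta>0 \<bullet> \<theta> = \<theta> \<bullet> \<theta> \<or> \<theta>0 \<bullet> \<theta> = - (\<theta> \<bullet> \<theta>)"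
    by (auto simp: abs_if split: if_splits)
  then have "(\<theta> - \<theta>0) \<bullet> (\<theta> - \<theta>0) = 0 \<or> (\<theta> + \<theta>0) \<bullet> (\<theta> + \<theta>0) = 0"
    using norms
    by (auto simp: inner_diff_left inner_diff_right inner_add_left inner_add_right inner_commute)
  then show ?thesis
    by (auto simp: add_eq_0_iff)
qed

lemma N_inf_strict_minimum:
  fixes \<theta>0 \<theta> :: "real ^ 'n::{finite,linorder}"
  assumes "\<theta>0 \<in> Theta1" "\<theta> \<in> Theta1" "\<theta> \<noteq> \<theta>0"
  shows "N_inf \<theta>0 \<theta>0 < N_inf \<theta>0 \<theta>"
proof -
  define f where "f x = mixture_ratio \<theta>0 \<theta> x - 1 - ln (mixture_ratio \<theta>0 \<theta> x)" for x
  have "\<theta> \<noteq> - \<theta>0"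
    using assms Theta1_uminus by blast
  then obtain x0 where "mixture_ratio \<theta>0 \<theta> x0 \<noteq> 1"
    using mixture_ratio_eq_1_imp \<open>\<theta> \<noteq> \<theta>0\<close> by blast
  have "0 < (\<integral>x. f x \<partial>gauss_Id \<theta>0)"
  proof (rule integral_gauss_Id_pos)
    show "continuous_on UNIV f"
      unfolding f_def
      by (intro continuous_intros continuous_on_mixture_ratio)
        (auto simp: mixture_ratio_pos[THEN less_imp_neq, symmetric])
    show "0 \<le> f x" for x
      using ln_le_minus_one[OF mixture_ratio_pos] by (simp add: f_def)
    show "integrable (gauss_Id \<theta>0) f"
      unfolding f_def ln_mixture_ratio
      by (intro Bochner_Integration.integrable_diff Bochner_Integration.integrable_add
          integrable_gauss_Id_mixture_ratio integrable_gauss_Id_const integrable_gauss_Id_ln_cosh_inner)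
    show "0 < f x0"
      using ln_le_minus_one[OF mixture_ratio_pos, of \<theta>0 \<theta> x0]
        ln_eq_minus_one[OF mixture_ratio_pos, of \<theta>0 \<theta> x0]
        \<open>mixture_ratio \<theta>0 \<theta> x0 \<noteq> 1\<close> unfolding f_def by linarith
  qed
  then show ?thesis
    using N_inf_diff_eq_integral[of \<theta>0 \<theta>] by (simp add: f_def)
qed

section \<open>Stationary points\<close>

lemma integral_tanh_scale_strict_ineq:
  fixes \<mu> v :: "real ^ 'n::finite"
  assumes "0 < a" "a < b" "v \<noteq> 0"
  shows "a * (\<integral>x. tanh (b * (v \<bullet> x)) * (v \<bullet> x) \<partial>gauss_Id \<mu>)
    < b * (\<integral>x. tanh (a * (v \<bullet> x)) * (v \<bullet> x) \<partial>gauss_Id \<mu>)"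
proof -
  have int: "integrable (gauss_Id \<mu>) (\<lambda>x. tanh (c * (v \<bullet> x)) * (v \<bullet> x))" for c
    using integrable_gauss_Id_tanh_mult_inner[of \<mu> "c *\<^sub>R v" v] by simp
  define f where "f x = b * (tanh (a * (v \<bullet> x)) * (v \<bullet> x)) - a * (tanh (b * (v \<bullet> x)) * (v \<bullet> x))" for x
  have "0 < (\<integral>x. f x \<partial>gauss_Id \<mu>)"
  proof (rule integral_gauss_Id_pos)
    show "continuous_on UNIV f"
      unfolding f_def by (intro continuous_intros) (auto simp: less_imp_neq[OF cosh_real_pos, symmetric])
    show "0 \<le> f x" for x
      using tanh_scale_strict_ineq[OF assms(1,2), of "v \<bullet> x"]
      by (cases "v \<bullet> x = 0") (simp_all add: f_def)
    show "integrable (gauss_Id \<mu>) f"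
      unfolding f_def using int by simp
    show "0 < f v"
      using tanh_scale_strict_ineq[OF assms(1,2), of "v \<bullet> v"] assms(3) by (simp add: f_def)
  qed
  then show ?thesis
    unfolding f_def using int by simp
qed

lemma N_inf_deriv_self: "N_inf_deriv \<theta>0 \<theta>0 = (\<lambda>h. 0)"
  for \<theta>0 :: "real ^ 'n::finite"
  by (rule ext) (simp add: N_inf_deriv_def integral_tanh_mult_inner_at_mean)

lemma N_inf_stationary_parallel:
  fixes \<theta>0 \<theta> :: "real ^ 'n::finite"
  assumes "N_inf_deriv \<theta>0 \<theta> = (\<lambda>h. 0)" "\<theta> \<noteq> 0"
  obtains \<kappa> where "\<theta> = \<kappa> *\<^sub>R \<theta>0"
proof -
  define S where "S = (\<integral>x. 1 - (tanh (\<theta> \<bullet> x))\<^sup>2 \<partial>gauss_Id \<theta>0)"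
  define T where "T = (\<integral>x. tanh (\<theta> \<bullet> x) \<partial>gauss_Id \<theta>0)"
  have "0 < (\<integral>x. (tanh (\<theta> \<bullet> x))\<^sup>2 \<partial>gauss_Id \<theta>0)"
    by (rule integral_gauss_Id_pos[where z = \<theta>])
      (auto intro!: continuous_intros simp: assms(2) less_imp_neq[OF cosh_real_pos, symmetric])
  then have "S < 1"
    by (simp add: S_def)
  have "((1 - S) *\<^sub>R \<theta> - T *\<^sub>R \<theta>0) \<bullet> h = 0" for h
    using fun_cong[OF assms(1), of h] integral_tanh_mult_inner[of \<theta>0 \<theta> h]
    by (simp add: N_inf_deriv_def S_def T_def inner_diff_left inner_commute algebra_simps)
  then have "(1 - S) *\<^sub>R \<theta> = T *\<^sub>R \<theta>0"
    using inner_eq_zero_iff by (metis eq_iff_diff_eq_0)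
  then have "\<theta> = (T / (1 - S)) *\<^sub>R \<theta>0"
    using \<open>S < 1\<close> by (metis (no_types, lifting) diff_gt_0_iff_gt divide_inverse_commute
        eq_vector_fraction_iff less_irrefl)
  then show ?thesis
    by (rule that)
qed

lemma N_inf_stationary_unique:
  fixes \<theta>0 \<theta> :: "real ^ 'n::{finite,linorder}"
  assumes "\<theta>0 \<in> Theta1" "\<theta> \<in> Theta1" "N_inf_deriv \<theta>0 \<theta> = (\<lambda>h. 0)"
  shows "\<theta> = \<theta>0"
proof -
  obtain \<kappa> where \<theta>: "\<theta> = \<kappa> *\<^sub>R \<theta>0"
    using N_inf_stationary_parallel assms(3) Theta1_nonzero[OF assms(2)] by blast
  have "\<kappa> \<noteq> 0"
    using Theta1_nonzero[OF assms(2)] \<theta> by auto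
  moreover have "\<not> \<kappa> < 0"
    using Theta1_scaleR[OF assms(1), of "- \<kappa>"] Theta1_uminus[OF assms(2)] \<theta> by auto
  ultimately have "0 < \<kappa>"
    by linarith
  have stationary: "\<kappa> * (\<theta>0 \<bullet> \<theta>0) = (\<integral>x. tanh (\<kappa> * (\<theta>0 \<bullet> x)) * (\<theta>0 \<bullet> x) \<partial>gauss_Id \<theta>0)"
    using fun_cong[OF assms(3), of \<theta>0] by (simp add: N_inf_deriv_def \<theta>)
  have at_mean: "\<theta>0 \<bullet> \<theta>0 = (\<integral>x. tanh (1 * (\<theta>0 \<bullet> x)) * (\<theta>0 \<bullet> x) \<partial>gauss_Id \<theta>0)"
    using integral_tanh_mult_inner_at_mean[of \<theta>0 \<theta>0] by simp
  have "\<theta>0 \<noteq> 0"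
    using Theta1_nonzero[OF assms(1)] .
  have "\<not> \<kappa> < 1"
    using integral_tanh_scale_strict_ineq[OF \<open>0 < \<kappa>\<close> _ \<open>\<theta>0 \<noteq> 0\<close>, of 1 \<theta>0]
      stationary at_mean by auto
  moreover have "\<not> 1 < \<kappa>"
    using integral_tanh_scale_strict_ineq[OF zero_less_one _ \<open>\<theta>0 \<noteq> 0\<close>, of \<kappa> \<theta>0]
      stationary at_mean by auto
  ultimately show ?thesis
    using \<theta> by simp
qed

theorem mainTheorem1:
  fixes \<theta>0 :: "real ^ 'n::{finite,linorder}"
  assumes "\<theta>0 \<in> Theta1"
  shows "(\<forall>\<theta>\<in>interior Theta1. N_inf \<theta>0 differentiable (at \<theta>))
    \<and> (\<forall>\<theta>\<in>Theta1. \<theta> \<noteq> \<theta>0 \<longrightarrow> N_inf \<theta>0 \<theta>0 < N_inf \<theta>0 \<theta>)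
    \<and> (\<forall>\<theta>\<in>interior Theta1.
          (N_inf \<theta>0 has_derivative (\<lambda>h. 0)) (at \<theta>) \<longleftrightarrow> \<theta> = \<theta>0)"
proof (intro conjI ballI)
  show "N_inf \<theta>0 differentiable (at \<theta>)" for \<theta>
    using N_inf_has_derivative by (auto simp: differentiable_def)
  show "\<theta> \<noteq> \<theta>0 \<longrightarrow> N_inf \<theta>0 \<theta>0 < N_inf \<theta>0 \<theta>" if "\<theta> \<in> Theta1" for \<theta>
    using N_inf_strict_minimum[OF assms that] by blast
  show "(N_inf \<theta>0 has_derivative (\<lambda>h. 0)) (at \<theta>) \<longleftrightarrow> \<theta> = \<theta>0" if "\<theta> \<in> interior Theta1" for \<theta>
  proof
    assume "(N_inf \<theta>0 has_derivative (\<lambda>h. 0)) (at \<theta>)"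
    then have "N_inf_deriv \<theta>0 \<theta> = (\<lambda>h. 0)"
      using has_derivative_unique N_inf_has_derivative by blast
    moreover have "\<theta> \<in> Theta1"
      using that interior_subset by blast
    ultimately show "\<theta> = \<theta>0"
      using N_inf_stationary_unique[OF assms] by blast
  next
    show "\<theta> = \<theta>0 \<Longrightarrow> (N_inf \<theta>0 has_derivative (\<lambda>h. 0)) (at \<theta>)"
      using N_inf_has_derivative[of \<theta>0 \<theta>0] by (simp add: N_inf_deriv_self)
  qed
qed

end
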